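(* Let $D_1,D_2\in B(\ell^2)$ be the diagonal operators $D_1(x_1,x_2,\ldots)=(2^{-1}x_1,2^{-2}x_2,\ldots)$ and $D_2(x_1,x_2,\ldots)=(2^{-2}x_1,2^{-4}x_2,\ldots)$ (i.e. diagonals $2^{-n}$ and $2^{-2n}$). Then $I_{D_1}=I_{D_2}$, but $D_1$ and $D_2$ are not equivalent after extension. In particular, for compact operators, generating the same operator ideal does not imply equivalence after extension.
   Context: $\ell^2=\ell^2(\mathbb N)$ over $\mathbb C$; $B(X,Y)$ denotes bounded linear operators. $X\oplus Y$ is the $\ell^2$-direct sum, $\mathrm{id}_X$ the identity. Operators $T\in B(X)$ and $S\in B(Y)$ are equivalent after extension if there exist Banach spaces $X'$, $Y'$ and invertible (boundedly) operators $E\in B(Y\oplus Y',X\oplus X')$ and $F\in B(X\oplus X',Y\oplus Y')$ with $\begin{bmatrix}T&0\\0&\mathrm{id}_{X'}\end{bmatrix}=E\begin{bmatrix}S&0\\0&\mathrm{id}_{Y'}\end{bmatrix}F$. For $T\in B(X,Y)$ and Banach spaces $Z_1,Z_2$, $I_T(Z_1,Z_2)=\bigcup_{n\in\mathbb N}\{\sum_{j=1}^n R_jTR_j' : R_j\in B(Y,Z_2),\ R_j'\in B(Z_1,X)\}$ and $I_T=\bigcup_{Z_1,Z_2}I_T(Z_1,Z_2)$; $I_T=I_S$ means equality of these sets for all $Z_1,Z_2$. *)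

theory Defs
  imports "HOL-Analysis.Analysis"
begin

text \<open>Complex Banach spaces are modelled as real Banach spaces (class banach)
  together with a complex structure J (multiplication by i).\<close>

definition cscale :: "('a::real_vector \<Rightarrow> 'a) \<Rightarrow> complex \<Rightarrow> 'a \<Rightarrow> 'a" where
  "cscale J c x = Re c *\<^sub>R x + Im c *\<^sub>R J x"

definition complex_structure :: "('a::real_normed_vector \<Rightarrow> 'a) \<Rightarrow> bool" where
  "complex_structure J \<longleftrightarrow> linear J \<and> (\<forall>x. J (J x) = - x)
     \<and> (\<forall>c x. norm (cscale J c x) = cmod c * norm x)"

definition cblin :: "('a::real_normed_vector \<Rightarrow> 'a) \<Rightarrow> ('b::real_normed_vector \<Rightarrow> 'b)
     \<Rightarrow> ('a \<Rightarrow> 'b) \<Rightarrow> bool" where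
  "cblin JX JY T \<longleftrightarrow> bounded_linear T \<and> (\<forall>x. T (JX x) = JY (T x))"

definition cinvertible :: "('a::real_normed_vector \<Rightarrow> 'a) \<Rightarrow> ('b::real_normed_vector \<Rightarrow> 'b)
     \<Rightarrow> ('a \<Rightarrow> 'b) \<Rightarrow> bool" where
  "cinvertible JX JY T \<longleftrightarrow> cblin JX JY T \<and>
     (\<exists>G. cblin JY JX G \<and> (\<forall>x. G (T x) = x) \<and> (\<forall>y. T (G y) = y))"

text \<open>Complex structure on the direct sum; the product norm of Isabelle is the l2-sum norm.\<close>
definition sumJ :: "('a \<Rightarrow> 'a) \<Rightarrow> ('b \<Rightarrow> 'b) \<Rightarrow> 'a \<times> 'b \<Rightarrow> 'a \<times> 'b" where
  "sumJ J1 J2 = map_prod J1 J2"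

definition ext_id :: "('a \<Rightarrow> 'b) \<Rightarrow> 'a \<times> 'c \<Rightarrow> 'b \<times> 'c" where
  "ext_id T p = (T (fst p), snd p)"

text \<open>T in B(X) and S in B(Y) are equivalent after extension via the given
  spaces X' and Y'.  Equivalence after extension is the existence of such X', Y'.\<close>
definition equiv_after_ext_via ::
  "('x::real_normed_vector \<Rightarrow> 'x) \<Rightarrow> ('y::real_normed_vector \<Rightarrow> 'y)
   \<Rightarrow> ('x1::real_normed_vector \<Rightarrow> 'x1) \<Rightarrow> ('y1::real_normed_vector \<Rightarrow> 'y1)
   \<Rightarrow> ('x \<Rightarrow> 'x) \<Rightarrow> ('y \<Rightarrow> 'y) \<Rightarrow> bool" where
  "equiv_after_ext_via JX JY JX' JY' T S \<longleftrightarrow>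
     (\<exists>(E :: 'y \<times> 'y1 \<Rightarrow> 'x \<times> 'x1) (F :: 'x \<times> 'x1 \<Rightarrow> 'y \<times> 'y1).
        cinvertible (sumJ JY JY') (sumJ JX JX') E \<and>
        cinvertible (sumJ JX JX') (sumJ JY JY') F \<and>
        (\<forall>p. ext_id T p = E (ext_id S (F p))))"

definition op_ideal ::
  "('x::real_normed_vector \<Rightarrow> 'x) \<Rightarrow> ('y::real_normed_vector \<Rightarrow> 'y)
   \<Rightarrow> ('z1::real_normed_vector \<Rightarrow> 'z1) \<Rightarrow> ('z2::real_normed_vector \<Rightarrow> 'z2)
   \<Rightarrow> ('x \<Rightarrow> 'y) \<Rightarrow> ('z1 \<Rightarrow> 'z2) set" where
  "op_ideal JX JY JZ1 JZ2 T =
     {(\<lambda>z. \<Sum>j<n. R j (T (R' j z))) | (n::nat) R R'.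
        \<forall>j<n. cblin JY JZ2 (R j) \<and> cblin JZ1 JX (R' j)}"

definition l2_seq :: "(nat \<Rightarrow> complex) set" where
  "l2_seq = {x. summable (\<lambda>n. (cmod (x n))\<^sup>2)}"

definition is_l2_model :: "('h::real_normed_vector \<Rightarrow> 'h) \<Rightarrow> ((nat \<Rightarrow> complex) \<Rightarrow> 'h) \<Rightarrow> bool" where
  "is_l2_model JH U \<longleftrightarrow> complex_structure JH \<and> bij_betw U l2_seq UNIV \<and>
     (\<forall>x\<in>l2_seq. \<forall>y\<in>l2_seq. U (\<lambda>n. x n + y n) = U x + U y) \<and>
     (\<forall>c. \<forall>x\<in>l2_seq. U (\<lambda>n. c * x n) = cscale JH c (U x)) \<and>
     (\<forall>x\<in>l2_seq. norm (U x) = sqrt (\<Sum>n. (cmod (x n))\<^sup>2))"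

text \<open>Diagonal operator with diagonal d (index n = 0,1,... corresponds to x_(n+1)).\<close>
definition diag_op :: "((nat \<Rightarrow> complex) \<Rightarrow> 'h) \<Rightarrow> (nat \<Rightarrow> complex) \<Rightarrow> 'h \<Rightarrow> 'h" where
  "diag_op U d h = U (\<lambda>n. d n * inv_into l2_seq U h n)"

end

theory Submission
  imports Defs
begin

text \<open>
  Write D1, D2 for the diagonal operators with entries 2^-(n+1) and 4^-(n+1).
  The ideals agree because D2 = D1 D1 and, splitting l2 into odd and even coordinates,
  D1 = A1 D2 B1 + A2 D2 B2 with bounded restriction and extension maps A_i, B_i: on the
  coordinate 2k+1 the entry of D1 is that of D2 at k, on 2k it is twice that.

  For non-equivalence suppose D1 \<oplus> id = E (D2 \<oplus> id) F. A dimension count gives h \<noteq> 0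
  supported on the coordinates n0..n0+m whose image g = fst (F (h, 0)) vanishes on the first m
  coordinates. Writing (h', x) = F\<inverse>(0, snd (F (h, 0))), we get E (D2 g, 0) = (D1 (h - h'), -x),
  so D1 (h - h') and x are bounded by a constant times 4^-m |h|. Since
  |h'|^2 + |x|^2 is controlled by |D1 h'|^2 + |x|^2 and D1 is tiny beyond n0, h' is essentially
  supported below n0, where h vanishes; hence |D1 h| is at most a constant times 4^-m |h|.
  But |D1 h| \<ge> 2^-(n0+m+1) |h|, which is a contradiction for large m.
\<close>

section \<open>Square-summable sequences\<close>

lemma l2_seqI: "summable (\<lambda>n. (cmod (x n))\<^sup>2) \<Longrightarrow> x \<in> l2_seq"
  and l2_seqD: "x \<in> l2_seq \<Longrightarrow> summable (\<lambda>n. (cmod (x n))\<^sup>2)"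
  by (simp_all add: l2_seq_def)

lemma l2_seq_dominated:
  assumes x: "x \<in> l2_seq" and le: "\<And>n. (cmod (y n))\<^sup>2 \<le> K * (cmod (x n))\<^sup>2"
  shows "y \<in> l2_seq" "(\<Sum>n. (cmod (y n))\<^sup>2) \<le> K * (\<Sum>n. (cmod (x n))\<^sup>2)"
proof -
  have sK: "summable (\<lambda>n. K * (cmod (x n))\<^sup>2)"
    using l2_seqD[OF x] by (rule summable_mult)
  have sy: "summable (\<lambda>n. (cmod (y n))\<^sup>2)"
    by (rule summable_comparison_test'[OF sK, of 0]) (simp add: le)
  then show "y \<in> l2_seq" by (rule l2_seqI)
  have "(\<Sum>n. (cmod (y n))\<^sup>2) \<le> (\<Sum>n. K * (cmod (x n))\<^sup>2)"
    by (rule suminf_le[OF le sy sK])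
  also have "\<dots> = K * (\<Sum>n. (cmod (x n))\<^sup>2)"
    using l2_seqD[OF x] by (rule suminf_mult)
  finally show "(\<Sum>n. (cmod (y n))\<^sup>2) \<le> K * (\<Sum>n. (cmod (x n))\<^sup>2)" .
qed

lemma l2_seq_add:
  assumes "x \<in> l2_seq" "y \<in> l2_seq"
  shows "(\<lambda>n. x n + y n) \<in> l2_seq"
proof (rule l2_seqI, rule summable_comparison_test')
  show "summable (\<lambda>n. 2 * (cmod (x n))\<^sup>2 + 2 * (cmod (y n))\<^sup>2)"
    using assms by (intro summable_add summable_mult l2_seqD)
  have "(cmod (x n + y n))\<^sup>2 \<le> 2 * (cmod (x n))\<^sup>2 + 2 * (cmod (y n))\<^sup>2" for n
  proof -
    have "(cmod (x n + y n))\<^sup>2 \<le> (cmod (x n) + cmod (y n))\<^sup>2"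
      by (rule power_mono[OF norm_triangle_ineq norm_ge_zero])
    also have "\<dots> \<le> 2 * (cmod (x n))\<^sup>2 + 2 * (cmod (y n))\<^sup>2"
      by (simp add: power2_sum) (smt (verit) sum_squares_bound)
    finally show ?thesis .
  qed
  then show "norm ((cmod (x n + y n))\<^sup>2) \<le> 2 * (cmod (x n))\<^sup>2 + 2 * (cmod (y n))\<^sup>2" for n
    by simp
qed

lemma l2_seq_scale: "x \<in> l2_seq \<Longrightarrow> (\<lambda>n. c * x n) \<in> l2_seq"
  by (erule l2_seq_dominated(1)[of _ _ "(cmod c)\<^sup>2"]) (simp add: norm_mult power_mult_distrib)

lemma l2_seq_finite_support: "(\<And>k. m \<le> k \<Longrightarrow> z k = 0) \<Longrightarrow> z \<in> l2_seq"
  by (rule l2_seqI, rule summable_finite[of "{..<m}"]) auto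

definition restrict_seq :: "(nat \<Rightarrow> nat) \<Rightarrow> (nat \<Rightarrow> complex) \<Rightarrow> nat \<Rightarrow> complex" where
  "restrict_seq g x = (\<lambda>k. x (g k))"

definition extend_seq :: "(nat \<Rightarrow> nat) \<Rightarrow> (nat \<Rightarrow> complex) \<Rightarrow> nat \<Rightarrow> complex" where
  "extend_seq g y = (\<lambda>n. if n \<in> range g then y (inv g n) else 0)"

lemma extend_seq_apply: "inj g \<Longrightarrow> extend_seq g y (g k) = y k"
  by (simp add: extend_seq_def)

lemma extend_seq_outside: "n \<notin> range g \<Longrightarrow> extend_seq g y n = 0"
  by (simp add: extend_seq_def)

lemma l2_seq_restrict:
  assumes g: "strict_mono g" and x: "x \<in> l2_seq"
  shows "restrict_seq g x \<in> l2_seq"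
    "(\<Sum>k. (cmod (restrict_seq g x k))\<^sup>2) \<le> 1 * (\<Sum>n. (cmod (x n))\<^sup>2)"
proof -
  define f where "f n = (if n \<in> range g then (cmod (x n))\<^sup>2 else 0)" for n
  have f0: "\<And>n. n \<notin> range g \<Longrightarrow> f n = 0" by (simp add: f_def)
  have fg: "(\<lambda>k. f (g k)) = (\<lambda>k. (cmod (restrict_seq g x k))\<^sup>2)"
    by (simp add: f_def restrict_seq_def)
  have sf: "summable f"
    by (rule summable_comparison_test'[OF l2_seqD[OF x], of 0]) (simp add: f_def)
  then show "restrict_seq g x \<in> l2_seq"
    using summable_mono_reindex[of g f, OF g f0] fg by (simp add: l2_seqI)
  have "(\<Sum>k. f (g k)) = suminf f" by (rule suminf_mono_reindex[of g f, OF g f0])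
  also have "\<dots> \<le> (\<Sum>n. (cmod (x n))\<^sup>2)"
    by (rule suminf_le[OF _ sf l2_seqD[OF x]]) (simp add: f_def)
  finally show "(\<Sum>k. (cmod (restrict_seq g x k))\<^sup>2) \<le> 1 * (\<Sum>n. (cmod (x n))\<^sup>2)"
    by (simp add: fg)
qed

lemma l2_seq_extend:
  assumes g: "strict_mono g" and y: "y \<in> l2_seq"
  shows "extend_seq g y \<in> l2_seq"
    "(\<Sum>n. (cmod (extend_seq g y n))\<^sup>2) \<le> 1 * (\<Sum>k. (cmod (y k))\<^sup>2)"
proof -
  define f where "f n = (cmod (extend_seq g y n))\<^sup>2" for n
  have f0: "\<And>n. n \<notin> range g \<Longrightarrow> f n = 0" by (simp add: f_def extend_seq_outside)
  have fg: "(\<lambda>k. f (g k)) = (\<lambda>k. (cmod (y k))\<^sup>2)"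
    using strict_mono_imp_inj_on[OF g] by (simp add: f_def extend_seq_apply)
  have "summable f"
    using summable_mono_reindex[of g f, OF g f0] l2_seqD[OF y] by (simp add: fg)
  then show "extend_seq g y \<in> l2_seq" by (simp add: f_def[abs_def] l2_seqI)
  have "suminf f = (\<Sum>k. (cmod (y k))\<^sup>2)"
    using suminf_mono_reindex[of g f, OF g f0] fg by simp
  then show "(\<Sum>n. (cmod (extend_seq g y n))\<^sup>2) \<le> 1 * (\<Sum>k. (cmod (y k))\<^sup>2)"
    by (simp add: f_def[abs_def])
qed

section \<open>Coordinates in a model of l2\<close>

lemma cscale_of_real: "cscale J (complex_of_real r) x = r *\<^sub>R x"
  by (simp add: cscale_def)

lemma cscale_ii: "cscale J \<i> x = J x"
  by (simp add: cscale_def)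

lemma cblin_id: "cblin J J (\<lambda>x. x)"
  by (simp add: cblin_def bounded_linear_ident)

lemma cblin_compose: "cblin JB JC f \<Longrightarrow> cblin JA JB g \<Longrightarrow> cblin JA JC (\<lambda>x. f (g x))"
  unfolding cblin_def using bounded_linear_compose[of f g] by (auto simp: o_def)

lemma cblin_scaleR: "linear J \<Longrightarrow> cblin J J (\<lambda>x. c *\<^sub>R x)"
  by (simp add: cblin_def bounded_linear_scaleR_right linear_scale)

locale l2_model =
  fixes JH :: "'h::banach \<Rightarrow> 'h" and U :: "(nat \<Rightarrow> complex) \<Rightarrow> 'h"
  assumes model: "is_l2_model JH U"
begin

definition coord :: "'h \<Rightarrow> nat \<Rightarrow> complex" where
  "coord h = inv_into l2_seq U h"

lemma complex_structure: "complex_structure JH"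
  and bij: "bij_betw U l2_seq UNIV"
  and U_add: "x \<in> l2_seq \<Longrightarrow> y \<in> l2_seq \<Longrightarrow> U (\<lambda>n. x n + y n) = U x + U y"
  and U_cscale: "x \<in> l2_seq \<Longrightarrow> U (\<lambda>n. c * x n) = cscale JH c (U x)"
  and norm_U: "x \<in> l2_seq \<Longrightarrow> norm (U x) = sqrt (\<Sum>n. (cmod (x n))\<^sup>2)"
  using model by (simp_all add: is_l2_model_def)

lemma linear_JH: "linear JH"
  using complex_structure by (simp add: complex_structure_def)

lemma coord_l2: "coord h \<in> l2_seq"
  using bij inv_into_into[of h U l2_seq] unfolding coord_def bij_betw_def by simp

lemma U_coord [simp]: "U (coord h) = h"
  using bij unfolding coord_def bij_betw_def by (simp add: f_inv_into_f)

lemma coord_U [simp]: "x \<in> l2_seq \<Longrightarrow> coord (U x) = x"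
  using bij unfolding coord_def bij_betw_def by simp

lemma coord_add: "coord (a + b) = (\<lambda>n. coord a n + coord b n)"
  using coord_U[OF l2_seq_add[OF coord_l2 coord_l2]] by (simp add: U_add coord_l2)

lemma coord_cscale: "coord (cscale JH c a) = (\<lambda>n. c * coord a n)"
  using coord_U[OF l2_seq_scale[OF coord_l2]] by (simp add: U_cscale coord_l2)

lemma coord_scaleR: "coord (r *\<^sub>R a) = (\<lambda>n. complex_of_real r * coord a n)"
  using coord_cscale[of "complex_of_real r"] by (simp add: cscale_of_real)

lemma coord_JH: "coord (JH a) = (\<lambda>n. \<i> * coord a n)"
  using coord_cscale[of \<i>] by (simp add: cscale_ii)

lemma coord_zero: "coord 0 = (\<lambda>n. 0)"
  using coord_scaleR[of 0] by simp

lemma U_zero: "U (\<lambda>n. 0) = 0"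
  using U_coord[of 0] by (simp add: coord_zero)

lemma coord_inject: "coord a = coord b \<longleftrightarrow> a = b"
  by (metis U_coord)

lemma coord_eq_0_iff: "coord h = (\<lambda>n. 0) \<longleftrightarrow> h = 0"
  by (metis U_coord U_zero coord_zero)

lemma coord_diff: "coord (a - b) = (\<lambda>n. coord a n - coord b n)"
  using coord_add[of a "- b"] coord_scaleR[of "- 1" b] by simp

lemma norm_sq_coord: "(norm h)\<^sup>2 = (\<Sum>n. (cmod (coord h n))\<^sup>2)"
proof -
  have "0 \<le> (\<Sum>n. (cmod (coord h n))\<^sup>2)"
    using l2_seqD[OF coord_l2] by (rule suminf_nonneg) simp
  then show ?thesis using norm_U[OF coord_l2, of h] by simp
qed

definition seq_op :: "((nat \<Rightarrow> complex) \<Rightarrow> nat \<Rightarrow> complex) \<Rightarrow> 'h \<Rightarrow> 'h" where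
  "seq_op M h = U (M (coord h))"

lemma cblin_seq_op:
  assumes l2: "\<And>x. x \<in> l2_seq \<Longrightarrow> M x \<in> l2_seq"
    and add: "\<And>x y. M (\<lambda>n. x n + y n) = (\<lambda>n. M x n + M y n)"
    and scale: "\<And>x c. M (\<lambda>n. c * x n) = (\<lambda>n. c * M x n)"
    and bound: "\<And>x. x \<in> l2_seq \<Longrightarrow> (\<Sum>n. (cmod (M x n))\<^sup>2) \<le> K * (\<Sum>n. (cmod (x n))\<^sup>2)"
  shows "cblin JH JH (seq_op M)"
proof -
  have coord_seq_op: "coord (seq_op M h) = M (coord h)" for h
    by (simp add: seq_op_def l2 coord_l2)
  have lin: "linear (seq_op M)"
  proof (rule linearI)
    show "seq_op M (a + b) = seq_op M a + seq_op M b" for a b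
      unfolding seq_op_def coord_add add by (rule U_add[OF l2[OF coord_l2] l2[OF coord_l2]])
    show "seq_op M (r *\<^sub>R a) = r *\<^sub>R seq_op M a" for r a
      unfolding seq_op_def coord_scaleR scale
      using U_cscale[OF l2[OF coord_l2]] by (simp add: cscale_of_real)
  qed
  have "norm (seq_op M h) \<le> norm h * sqrt K" for h
  proof -
    have "(norm (seq_op M h))\<^sup>2 \<le> K * (norm h)\<^sup>2"
      using bound[OF coord_l2] by (simp add: norm_sq_coord coord_seq_op)
    then show ?thesis using real_le_rsqrt by (fastforce simp: real_sqrt_mult mult.commute)
  qed
  then have "bounded_linear (seq_op M)"
    using lin by (intro bounded_linear.intro bounded_linear_axioms.intro) blast+
  moreover have "seq_op M (JH h) = JH (seq_op M h)" for h
    using U_cscale[OF l2[OF coord_l2], of \<i> h]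
    by (simp add: seq_op_def coord_JH scale cscale_ii)
  ultimately show ?thesis by (simp add: cblin_def)
qed

lemma seq_op_seq_op:
  "(\<And>x. x \<in> l2_seq \<Longrightarrow> N x \<in> l2_seq) \<Longrightarrow> seq_op M (seq_op N h) = seq_op (\<lambda>x. M (N x)) h"
  by (simp add: seq_op_def coord_l2)

lemma seq_op_add:
  "(\<And>x. x \<in> l2_seq \<Longrightarrow> M x \<in> l2_seq) \<Longrightarrow> (\<And>x. x \<in> l2_seq \<Longrightarrow> N x \<in> l2_seq) \<Longrightarrow>
   seq_op M h + seq_op N h = seq_op (\<lambda>x n. M x n + N x n) h"
  by (simp add: seq_op_def U_add coord_l2)

end

section \<open>Diagonal operators\<close>

lemma bounded_rangeI: "(\<And>k. cmod (d k) \<le> B) \<Longrightarrow> bounded (range d)" for d :: "nat \<Rightarrow> complex"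
  by (auto simp: bounded_iff)

lemma bounded_rangeE:
  fixes d :: "nat \<Rightarrow> complex"
  assumes "bounded (range d)"
  obtains B where "B \<ge> 0" "\<And>k. cmod (d k) \<le> B"
proof -
  from assms obtain B where "\<And>k. cmod (d k) \<le> B" unfolding bounded_iff by blast
  moreover from this[of 0] have "B \<ge> 0" using norm_ge_zero order.trans by blast
  ultimately show ?thesis using that by blast
qed

lemma bounded_range_mult:
  fixes d e :: "nat \<Rightarrow> complex"
  assumes "bounded (range d)" "bounded (range e)"
  shows "bounded (range (\<lambda>k. d k * e k))"
proof -
  obtain B where B: "B \<ge> 0" "\<And>k. cmod (d k) \<le> B" using bounded_rangeE[OF assms(1)] by blast
  obtain B' where B': "\<And>k. cmod (e k) \<le> B'" using bounded_rangeE[OF assms(2)] by blast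
  have "cmod (d k * e k) \<le> B * B'" for k
    unfolding norm_mult by (rule mult_mono[OF B(2) B' B(1) norm_ge_zero])
  then show ?thesis by (rule bounded_rangeI)
qed

lemma l2_seq_mult_bounded:
  fixes d :: "nat \<Rightarrow> complex"
  assumes "bounded (range d)"
  obtains K where "\<And>x. x \<in> l2_seq \<Longrightarrow> (\<lambda>n. d n * x n) \<in> l2_seq"
    "\<And>x. x \<in> l2_seq \<Longrightarrow> (\<Sum>n. (cmod (d n * x n))\<^sup>2) \<le> K * (\<Sum>n. (cmod (x n))\<^sup>2)"
proof -
  obtain B where B: "B \<ge> 0" "\<And>k. cmod (d k) \<le> B" using bounded_rangeE[OF assms] by blast
  have le: "(cmod (d n * x n))\<^sup>2 \<le> B\<^sup>2 * (cmod (x n))\<^sup>2" for n and x :: "nat \<Rightarrow> complex"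
    unfolding norm_mult power_mult_distrib
    by (rule mult_right_mono[OF power_mono[OF B(2) norm_ge_zero] zero_le_power2])
  show ?thesis
    by (rule that[of "B\<^sup>2"]; erule l2_seq_dominated; rule le)
qed

lemma l2_seq_mult:
  fixes d :: "nat \<Rightarrow> complex"
  shows "bounded (range d) \<Longrightarrow> x \<in> l2_seq \<Longrightarrow> (\<lambda>n. d n * x n) \<in> l2_seq"
  by (metis l2_seq_mult_bounded)

context l2_model
begin

lemma diag_op_eq_seq_op: "diag_op U d = seq_op (\<lambda>x n. d n * x n)"
  by (intro ext) (simp add: diag_op_def seq_op_def coord_def)

lemma cblin_diag_op: "bounded (range d) \<Longrightarrow> cblin JH JH (diag_op U d)"
  unfolding diag_op_eq_seq_op
  by (erule l2_seq_mult_bounded, rule cblin_seq_op) (auto simp: algebra_simps)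

lemma linear_diag_op: "bounded (range d) \<Longrightarrow> linear (diag_op U d)"
  using cblin_diag_op by (simp add: cblin_def bounded_linear.linear)

lemma coord_diag_op: "bounded (range d) \<Longrightarrow> coord (diag_op U d h) = (\<lambda>k. d k * coord h k)"
  by (simp add: diag_op_eq_seq_op seq_op_def l2_seq_mult coord_l2)

lemma diag_op_diag_op:
  "bounded (range d) \<Longrightarrow> bounded (range e) \<Longrightarrow>
   diag_op U d (diag_op U e h) = diag_op U (\<lambda>k. d k * e k) h"
  by (simp add: diag_op_eq_seq_op seq_op_seq_op l2_seq_mult mult.assoc)

lemma diag_op_add:
  "bounded (range d) \<Longrightarrow> bounded (range e) \<Longrightarrow>
   diag_op U d h + diag_op U e h = diag_op U (\<lambda>k. d k + e k) h"
  by (simp add: diag_op_eq_seq_op seq_op_add l2_seq_mult distrib_right)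

lemma diag_op_eq_0: "bounded (range d) \<Longrightarrow> (\<And>k. d k * coord h k = 0) \<Longrightarrow> diag_op U d h = 0"
  by (simp add: coord_diag_op fun_eq_iff flip: coord_eq_0_iff)

lemma norm_diag_op_le:
  assumes d: "bounded (range d)" and r: "\<And>k. coord h k \<noteq> 0 \<Longrightarrow> cmod (d k) \<le> r"
  shows "norm (diag_op U d h) \<le> r * norm h"
proof (cases "h = 0")
  case True
  then show ?thesis using linear_0[OF linear_diag_op[OF d]] by simp
next
  case False
  then have "coord h \<noteq> (\<lambda>n. 0)" by (simp add: coord_eq_0_iff)
  then obtain k0 where "coord h k0 \<noteq> 0" by auto
  then have "r \<ge> 0" using r[of k0] norm_ge_zero order.trans by blast
  have le: "(cmod (d k * coord h k))\<^sup>2 \<le> r\<^sup>2 * (cmod (coord h k))\<^sup>2" for k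
  proof (cases "coord h k = 0")
    case False
    then show ?thesis unfolding norm_mult power_mult_distrib
      by (rule mult_right_mono[OF power_mono[OF r norm_ge_zero] zero_le_power2])
  qed simp
  have "(norm (diag_op U d h))\<^sup>2 \<le> r\<^sup>2 * (norm h)\<^sup>2"
    unfolding norm_sq_coord coord_diag_op[OF d] by (rule l2_seq_dominated(2)[OF coord_l2 le])
  also have "\<dots> = (r * norm h)\<^sup>2" by (simp add: power_mult_distrib)
  finally show ?thesis by (rule power2_le_imp_le) (simp add: \<open>r \<ge> 0\<close>)
qed

lemma norm_diag_op_ge:
  assumes d: "bounded (range d)" and "r \<ge> 0" and r: "\<And>k. coord h k \<noteq> 0 \<Longrightarrow> r \<le> cmod (d k)"
  shows "r * norm h \<le> norm (diag_op U d h)"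
proof -
  have le: "(cmod (r * coord h k))\<^sup>2 \<le> 1 * (cmod (d k * coord h k))\<^sup>2" for k
  proof (cases "coord h k = 0")
    case False
    have "r\<^sup>2 \<le> (cmod (d k))\<^sup>2" using r[OF False] \<open>r \<ge> 0\<close> by (rule power_mono)
    then have "r\<^sup>2 * (cmod (coord h k))\<^sup>2 \<le> (cmod (d k))\<^sup>2 * (cmod (coord h k))\<^sup>2"
      by (rule mult_right_mono) simp
    then show ?thesis using \<open>r \<ge> 0\<close> by (simp add: norm_mult power_mult_distrib)
  qed simp
  have "(r * norm h)\<^sup>2 = r\<^sup>2 * (\<Sum>k. (cmod (coord h k))\<^sup>2)"
    by (simp only: power_mult_distrib norm_sq_coord)
  also have "\<dots> = (\<Sum>k. (cmod (r * coord h k))\<^sup>2)"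
    using suminf_mult[OF l2_seqD[OF coord_l2, of h], of "r\<^sup>2"] \<open>r \<ge> 0\<close>
    by (simp add: power_mult_distrib norm_mult)
  also have "\<dots> \<le> 1 * (norm (diag_op U d h))\<^sup>2"
    unfolding norm_sq_coord coord_diag_op[OF d]
    using l2_seq_dominated(2)[OF l2_seq_mult[OF d coord_l2], of "\<lambda>k. r * coord h k" 1] le
    by simp
  finally have "(r * norm h)\<^sup>2 \<le> (norm (diag_op U d h))\<^sup>2" by (simp only: mult_1)
  then show ?thesis by (rule power2_le_imp_le) simp
qed

end

section \<open>Operator ideals\<close>

lemma op_idealI:
  fixes n :: nat
  assumes "f = (\<lambda>z. \<Sum>j<n. R j (T (R' j z)))"
    and "\<And>j. j < n \<Longrightarrow> cblin JY JZ2 (R j) \<and> cblin JZ1 JX (R' j)"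
  shows "f \<in> op_ideal JX JY JZ1 JZ2 T"
proof -
  have "\<forall>j<n. cblin JY JZ2 (R j) \<and> cblin JZ1 JX (R' j)" using assms(2) by blast
  with assms(1) show ?thesis unfolding op_ideal_def mem_Collect_eq by blast
qed

lemma op_idealE:
  assumes "f \<in> op_ideal JX JY JZ1 JZ2 T"
  obtains n :: nat and R R' where "f = (\<lambda>z. \<Sum>j<n. R j (T (R' j z)))"
    "\<And>j. j < n \<Longrightarrow> cblin JY JZ2 (R j) \<and> cblin JZ1 JX (R' j)"
proof -
  from assms obtain n :: nat and R R' where "f = (\<lambda>z. \<Sum>j<n. R j (T (R' j z)))"
    and "\<forall>j<n. cblin JY JZ2 (R j) \<and> cblin JZ1 JX (R' j)"
    unfolding op_ideal_def mem_Collect_eq by blast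
  then show ?thesis using that by blast
qed

lemma op_ideal_self: "T \<in> op_ideal JX JY JX JY T"
  by (rule op_idealI[where n="Suc 0" and R="\<lambda>_ y. y" and R'="\<lambda>_ x. x"]) (simp_all add: cblin_id)

lemma sum_lessThan_add:
  fixes f :: "nat \<Rightarrow> 'a::comm_monoid_add"
  shows "(\<Sum>j<n + m. f j) = (\<Sum>j<n. f j) + (\<Sum>j<m. f (n + j))"
  by (induction m) (simp_all add: add.assoc)

lemma op_ideal_add:
  assumes "f \<in> op_ideal JX JY JZ1 JZ2 T" "g \<in> op_ideal JX JY JZ1 JZ2 T"
  shows "(\<lambda>z. f z + g z) \<in> op_ideal JX JY JZ1 JZ2 T"
proof -
  obtain n :: nat and R R' where f: "f = (\<lambda>z. \<Sum>j<n. R j (T (R' j z)))"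
    and RR: "\<And>j. j < n \<Longrightarrow> cblin JY JZ2 (R j) \<and> cblin JZ1 JX (R' j)"
    using assms(1) by (rule op_idealE) blast
  obtain m :: nat and Q Q' where g: "g = (\<lambda>z. \<Sum>j<m. Q j (T (Q' j z)))"
    and QQ: "\<And>j. j < m \<Longrightarrow> cblin JY JZ2 (Q j) \<and> cblin JZ1 JX (Q' j)"
    using assms(2) by (rule op_idealE) blast
  define P where "P j = (if j < n then R j else Q (j - n))" for j
  define P' where "P' j = (if j < n then R' j else Q' (j - n))" for j
  have "(\<Sum>j<n + m. P j (T (P' j z))) = f z + g z" for z
    unfolding f g sum_lessThan_add by (simp add: P_def P'_def)
  moreover have "cblin JY JZ2 (P j) \<and> cblin JZ1 JX (P' j)" if "j < n + m" for j
    using RR QQ that by (auto simp: P_def P'_def)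
  ultimately show ?thesis by (intro op_idealI[where n="n + m" and R=P and R'=P']) auto
qed

lemma op_ideal_zero: "(\<lambda>z. 0) \<in> op_ideal JX JY JZ1 JZ2 T"
  by (rule op_idealI[where n=0]) simp_all

lemma op_ideal_compose:
  assumes f: "f \<in> op_ideal JX JY JZ1 JZ2 T" and A: "cblin JZ2 JW2 A" and B: "cblin JW1 JZ1 B"
  shows "(\<lambda>w. A (f (B w))) \<in> op_ideal JX JY JW1 JW2 T"
proof -
  obtain n :: nat and R R' where f_eq: "f = (\<lambda>z. \<Sum>j<n. R j (T (R' j z)))"
    and RR: "\<And>j. j < n \<Longrightarrow> cblin JY JZ2 (R j) \<and> cblin JZ1 JX (R' j)"
    using f by (rule op_idealE) blast
  have "linear A" using A by (simp add: cblin_def bounded_linear.linear)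
  then have "A (f (B w)) = (\<Sum>j<n. A (R j (T (R' j (B w)))))" for w
    unfolding f_eq by (rule linear_sum)
  then show ?thesis
    using RR A B by (intro op_idealI[where n=n and R="\<lambda>j y. A (R j y)" and R'="\<lambda>j w. R' j (B w)"])
      (auto intro: cblin_compose)
qed

lemma op_ideal_subset:
  assumes S: "S \<in> op_ideal JX JY JX JY T"
  shows "op_ideal JX JY JZ1 JZ2 S \<subseteq> op_ideal JX JY JZ1 JZ2 T"
proof
  fix f assume "f \<in> op_ideal JX JY JZ1 JZ2 S"
  then obtain n :: nat and R R' where f_eq: "f = (\<lambda>z. \<Sum>j<n. R j (S (R' j z)))"
    and RR: "\<And>j. j < n \<Longrightarrow> cblin JY JZ2 (R j) \<and> cblin JZ1 JX (R' j)"
    by (rule op_idealE) blast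
  have "k \<le> n \<Longrightarrow> (\<lambda>z. \<Sum>j<k. R j (S (R' j z))) \<in> op_ideal JX JY JZ1 JZ2 T" for k
  proof (induction k)
    case 0
    show ?case using op_ideal_zero by simp
  next
    case (Suc k)
    then have "(\<lambda>z. R k (S (R' k z))) \<in> op_ideal JX JY JZ1 JZ2 T"
      using RR by (intro op_ideal_compose[OF S]) auto
    with Suc show ?case by (simp add: op_ideal_add)
  qed
  then show "f \<in> op_ideal JX JY JZ1 JZ2 T" unfolding f_eq by blast
qed

section \<open>D1 and D2 generate the same ideal\<close>

context l2_model
begin

lemma cblin_restrict_seq: "strict_mono g \<Longrightarrow> cblin JH JH (seq_op (restrict_seq g))"
  by (rule cblin_seq_op[where K=1])
    (use l2_seq_restrict[of g] in \<open>auto simp: restrict_seq_def\<close>)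

lemma cblin_extend_seq: "strict_mono g \<Longrightarrow> cblin JH JH (seq_op (extend_seq g))"
  by (rule cblin_seq_op[where K=1])
    (use l2_seq_extend[of g] in \<open>auto simp: extend_seq_def\<close>)

lemma scaleR_seq_op:
  "(\<And>x. x \<in> l2_seq \<Longrightarrow> M x \<in> l2_seq) \<Longrightarrow> r *\<^sub>R seq_op M h = seq_op (\<lambda>x n. complex_of_real r * M x n) h"
  by (simp add: seq_op_def U_cscale coord_l2 cscale_of_real)

end

definition d1 :: "nat \<Rightarrow> complex" where "d1 n = (1/2) ^ (n+1)"
definition d2 :: "nat \<Rightarrow> complex" where "d2 n = (1/2) ^ (2*(n+1))"

lemma cmod_d1: "cmod (d1 n) = (1/2) ^ (n+1)"
  by (simp add: d1_def norm_power norm_divide)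

lemma cmod_d2: "cmod (d2 n) = (1/4) ^ (n+1)"
  by (simp add: d2_def norm_power norm_divide power_mult power2_eq_square)

lemma bounded_range_d1: "bounded (range d1)"
  by (rule bounded_rangeI[of _ 1]) (simp only: cmod_d1, rule power_le_one, simp_all)

lemma bounded_range_d2: "bounded (range d2)"
  by (rule bounded_rangeI[of _ 1]) (simp only: cmod_d2, rule power_le_one, simp_all)

lemma d1_mult_d1: "d1 n * d1 n = d2 n"
  by (simp add: d1_def d2_def power_add[symmetric] mult_2)

lemma d1_interleave:
  fixes x :: "nat \<Rightarrow> complex"
  defines "odd_idx \<equiv> \<lambda>k::nat. 2 * k + 1" and "even_idx \<equiv> \<lambda>k::nat. 2 * k"
  shows "d1 n * x n =
    extend_seq odd_idx (\<lambda>k. d2 k * restrict_seq odd_idx x k) n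
    + 2 * extend_seq even_idx (\<lambda>k. d2 k * restrict_seq even_idx x k) n"
proof -
  have inj: "inj odd_idx" "inj even_idx" by (auto simp: odd_idx_def even_idx_def inj_def)
  show ?thesis
  proof (cases "even n")
    case True
    then obtain k where n: "n = even_idx k" by (auto simp: even_idx_def elim: evenE)
    have "extend_seq odd_idx y n = 0" for y
      by (rule extend_seq_outside) (use True in \<open>auto simp: odd_idx_def\<close>)
    moreover have "(1/2::complex) ^ (2 * k + 1) = 2 * (1/2) ^ (2 * (k + 1))" by (simp add: field_simps)
    ultimately show ?thesis
      unfolding n extend_seq_apply[OF inj(2)] by (simp add: restrict_seq_def d1_def d2_def even_idx_def)
  next
    case False
    then obtain k where n: "n = odd_idx k" by (auto simp: odd_idx_def elim: oddE)
    have "extend_seq even_idx y n = 0" for y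
      by (rule extend_seq_outside) (use False in \<open>auto simp: even_idx_def\<close>)
    then show ?thesis
      unfolding n extend_seq_apply[OF inj(1)] by (simp add: restrict_seq_def d1_def d2_def odd_idx_def)
  qed
qed

context l2_model
begin

lemma diag_d1_interleave:
  defines "odd_idx \<equiv> \<lambda>k::nat. 2 * k + 1" and "even_idx \<equiv> \<lambda>k::nat. 2 * k"
  shows "diag_op U d1 h =
    seq_op (extend_seq odd_idx) (diag_op U d2 (seq_op (restrict_seq odd_idx) h))
    + 2 *\<^sub>R seq_op (extend_seq even_idx) (diag_op U d2 (seq_op (restrict_seq even_idx) h))"
proof -
  have mono: "strict_mono odd_idx" "strict_mono even_idx"
    by (auto simp: odd_idx_def even_idx_def strict_mono_def)
  note l2 = l2_seq_restrict(1)[OF mono(1)] l2_seq_restrict(1)[OF mono(2)]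
    l2_seq_extend(1)[OF mono(1)] l2_seq_extend(1)[OF mono(2)] l2_seq_mult[OF bounded_range_d2]
  show ?thesis
    unfolding diag_op_eq_seq_op
    by (simp add: l2 seq_op_seq_op scaleR_seq_op seq_op_add l2_seq_scale
      d1_interleave[folded odd_idx_def even_idx_def])
qed

lemma op_ideal_d1_eq_d2:
  "op_ideal JH JH JZ1 JZ2 (diag_op U d1) = op_ideal JH JH JZ1 JZ2 (diag_op U d2)"
proof
  let ?odd = "\<lambda>k::nat. 2 * k + 1" and ?even = "\<lambda>k::nat. 2 * k"
  have mono: "strict_mono ?odd" "strict_mono ?even" by (auto simp: strict_mono_def)
  have "diag_op U d1 \<in> op_ideal JH JH JH JH (diag_op U d2)"
    unfolding diag_d1_interleave[abs_def]
    by (intro op_ideal_add op_ideal_compose[OF op_ideal_self] cblin_compose[OF cblin_scaleR[OF linear_JH]]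
      cblin_extend_seq cblin_restrict_seq mono)
  then show "op_ideal JH JH JZ1 JZ2 (diag_op U d1) \<subseteq> op_ideal JH JH JZ1 JZ2 (diag_op U d2)"
    by (rule op_ideal_subset)
  have D1: "cblin JH JH (diag_op U d1)" by (rule cblin_diag_op[OF bounded_range_d1])
  have "diag_op U d2 = (\<lambda>h. diag_op U d1 (diag_op U d1 h))"
    by (simp add: diag_op_diag_op bounded_range_d1 d1_mult_d1)
  then have "diag_op U d2 \<in> op_ideal JH JH JH JH (diag_op U d1)"
    using op_ideal_compose[OF op_ideal_self cblin_id D1] by simp
  then show "op_ideal JH JH JZ1 JZ2 (diag_op U d2) \<subseteq> op_ideal JH JH JZ1 JZ2 (diag_op U d1)"
    by (rule op_ideal_subset)
qed

end

section \<open>Real bases of coordinate blocks\<close>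

lemma span_kernel_nonzero:
  fixes f :: "'a::real_vector \<Rightarrow> 'b::real_vector"
  assumes f: "linear f" and B: "independent B" and C: "finite C"
    and range: "f ` span B \<subseteq> span C" and card: "card C < card B"
  shows "\<exists>h\<in>span B. h \<noteq> 0 \<and> f h = 0"
proof (rule ccontr)
  assume "\<not> ?thesis"
  then have kernel: "\<And>h. h \<in> span B \<Longrightarrow> f h = 0 \<Longrightarrow> h = 0" by blast
  have inj: "inj_on f (span B)"
  proof (rule inj_onI)
    fix x y assume "x \<in> span B" "y \<in> span B" "f x = f y"
    then have "x - y = 0" by (intro kernel span_diff) (simp_all add: linear_diff[OF f])
    then show "x = y" by simp
  qed
  have "independent (f ` B)" by (rule linear_independent_injective_image[OF f B inj])
  moreover have "f ` B \<subseteq> span C" using range span_superset by blast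
  ultimately have "card (f ` B) \<le> card C" using independent_span_bound[OF C] by blast
  moreover have "card (f ` B) = card B" by (rule card_image[OF inj_on_subset[OF inj span_superset]])
  ultimately show False using card by simp
qed

lemma biorthogonal_independent:
  fixes v :: "'i \<Rightarrow> 'a::real_vector" and \<phi> :: "'i \<Rightarrow> 'a \<Rightarrow> real"
  assumes I: "finite I" and lin: "\<And>i. i \<in> I \<Longrightarrow> linear (\<phi> i)"
    and dual: "\<And>i j. i \<in> I \<Longrightarrow> j \<in> I \<Longrightarrow> \<phi> i (v j) = (if i = j then 1 else 0)"
  shows "inj_on v I" "independent (v ` I)"
proof -
  show inj: "inj_on v I"
  proof (rule inj_onI)
    fix i j assume "i \<in> I" "j \<in> I" "v i = v j"
    then have "\<phi> i (v i) = \<phi> i (v j)" by simp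
    with \<open>i \<in> I\<close> \<open>j \<in> I\<close> show "i = j" by (simp add: dual split: if_splits)
  qed
  show "independent (v ` I)"
  proof (rule independent_if_scalars_zero)
    fix c x assume sum0: "(\<Sum>y\<in>v ` I. c y *\<^sub>R y) = 0" and "x \<in> v ` I"
    then obtain i where i: "i \<in> I" "x = v i" by blast
    have "0 = \<phi> i (\<Sum>j\<in>I. c (v j) *\<^sub>R v j)"
      using sum0 linear_0[OF lin[OF i(1)]] by (simp add: sum.reindex[OF inj])
    also have "\<dots> = (\<Sum>j\<in>I. c (v j) * (if i = j then 1 else 0))"
      using i(1) by (simp add: linear_sum[OF lin] linear_scale[OF lin] dual)
    also have "\<dots> = c x" using I i by (simp add: if_distrib cong: if_cong)
    finally show "c x = 0" by simp
  qed (use I in simp)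
qed

context l2_model
begin

definition unit_vec :: "nat \<Rightarrow> 'h" where
  "unit_vec k = U (\<lambda>j. of_bool (j = k))"

text \<open>Spans and independence are taken over the reals, so each coordinate k contributes the
  two vectors e_k and i e_k.\<close>

definition block_vec :: "nat \<times> bool \<Rightarrow> 'h" where
  "block_vec = (\<lambda>(k, imag). if imag then JH (unit_vec k) else unit_vec k)"

definition block :: "nat \<Rightarrow> nat \<Rightarrow> 'h set" where
  "block n0 n = block_vec ` ({n0..<n} \<times> UNIV)"

lemma coord_unit_vec: "coord (unit_vec k) = (\<lambda>j. of_bool (j = k))"
  unfolding unit_vec_def by (rule coord_U, rule l2_seq_finite_support[of "Suc k"]) simp

lemma coord_block_vec:
  "coord (block_vec (k, imag)) j = (if j = k then (if imag then \<i> else 1) else 0)"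
  by (cases imag) (simp_all add: block_vec_def coord_JH coord_unit_vec)

lemma block_vec_biorthogonal:
  assumes "finite I"
  shows "inj_on block_vec I" "independent (block_vec ` I)"
proof -
  define \<phi> :: "nat \<times> bool \<Rightarrow> 'h \<Rightarrow> real" where
    "\<phi> i h = (if snd i then Im (coord h (fst i)) else Re (coord h (fst i)))" for i h
  have lin: "linear (\<phi> i)" for i
    by (rule linearI) (simp_all add: \<phi>_def coord_add coord_scaleR)
  have dual: "\<phi> i (block_vec j) = (if i = j then 1 else 0)" for i j
  proof -
    obtain k imag k' imag' where ij: "i = (k, imag)" "j = (k', imag')" by (cases i, cases j) blast
    show ?thesis by (simp add: ij \<phi>_def coord_block_vec)
  qed
  show "inj_on block_vec I" "independent (block_vec ` I)"
    using biorthogonal_independent[OF assms, of \<phi> block_vec] lin dual by simp_all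
qed

lemma independent_block: "independent (block n0 n)"
  unfolding block_def by (rule block_vec_biorthogonal(2)) simp

lemma card_block: "card (block n0 n) = 2 * (n - n0)"
  unfolding block_def by (simp add: card_image[OF block_vec_biorthogonal(1)] card_cartesian_product)

lemma finite_block: "finite (block n0 n)"
  by (simp add: block_def)

lemma coord_span_block:
  assumes "h \<in> span (block n0 n)" "k < n0 \<or> n \<le> k"
  shows "coord h k = 0"
proof -
  have "subspace {h. coord h k = 0}"
    by (auto simp: subspace_def coord_zero coord_add coord_scaleR)
  moreover have "block n0 n \<subseteq> {h. coord h k = 0}"
    using assms(2) by (auto simp: block_def coord_block_vec)
  ultimately show ?thesis using assms(1) span_minimal by blast
qed

lemma finite_support_in_span_block:
  "(\<And>k. m \<le> k \<Longrightarrow> coord h k = 0) \<Longrightarrow> h \<in> span (block 0 m)"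
proof (induction m arbitrary: h)
  case 0
  then have "h = 0" by (simp add: fun_eq_iff flip: coord_eq_0_iff)
  then show ?case by (simp add: span_zero)
next
  case (Suc m)
  define h' where "h' = diag_op U (\<lambda>k. of_bool (k < m)) h"
  have bdd: "bounded (range (\<lambda>k. of_bool (k < m) :: complex))" by (rule bounded_rangeI[of _ 1]) simp
  have coord_h': "coord h' = (\<lambda>k. of_bool (k < m) * coord h k)"
    unfolding h'_def by (rule coord_diag_op[OF bdd])
  have "h' \<in> span (block 0 m)" by (rule Suc.IH) (simp add: coord_h')
  moreover have "span (block 0 m) \<subseteq> span (block 0 (Suc m))"
    by (rule span_mono) (auto simp: block_def)
  moreover have "h - h' = Re (coord h m) *\<^sub>R block_vec (m, False) + Im (coord h m) *\<^sub>R block_vec (m, True)"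
    using Suc.prems
    by (auto simp: fun_eq_iff coord_h' coord_diff coord_add coord_scaleR coord_block_vec complex_eq_iff
        le_Suc_eq not_less simp flip: coord_inject)
  then have "h - h' \<in> span (block 0 (Suc m))"
    by (simp only:) (intro span_add span_scale span_base; auto simp: block_def)
  ultimately have "h' + (h - h') \<in> span (block 0 (Suc m))"
    by (intro span_add) auto
  then show ?case by simp
qed

end

section \<open>D1 and D2 are not equivalent after extension\<close>

lemma equiv_after_ext_correction:
  fixes T :: "'x::real_normed_vector \<Rightarrow> 'x" and S :: "'y::real_normed_vector \<Rightarrow> 'y"
    and E :: "'y \<times> 'y1::real_normed_vector \<Rightarrow> 'x \<times> 'x1::real_normed_vector"
    and F :: "'x \<times> 'x1 \<Rightarrow> 'y \<times> 'y1"
  assumes eq: "\<And>p. ext_id T p = E (ext_id S (F p))"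
    and T: "linear T" and S: "linear S" and E: "linear E"
    and cE: "\<And>z. norm (E z) \<le> norm z * cE"
    and Ei: "\<And>z. Ei (E z) = z" "\<And>z. norm (Ei z) \<le> norm z * cEi"
    and G: "\<And>z. F (G z) = z" "\<And>z. norm (G z) \<le> norm z * cG" "0 \<le> cG"
  shows "\<exists>h' (x::'x1). (norm h')\<^sup>2 + (norm x)\<^sup>2 \<le> (cG * cEi)\<^sup>2 * ((norm (T h'))\<^sup>2 + (norm x)\<^sup>2) \<and>
      (norm (T (h - h')))\<^sup>2 + (norm x)\<^sup>2 \<le> cE\<^sup>2 * (norm (S (fst (F (h, 0)))))\<^sup>2"
proof -
  obtain g y where Fh: "F (h, 0) = (g, y)" by fastforce
  obtain h' x where Gy: "G (0, y) = (h', x)" by fastforce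
  txt \<open>Correcting h by h' kills the second component: F (h - h', -x) = (g, 0).\<close>
  have Eh': "E (0, y) = (T h', x)"
    using eq[of "(h', x)"] G(1)[of "(0, y)"] linear_0[OF S] by (simp add: ext_id_def Gy)
  have Eh: "E (S g, y) = (T h, 0)"
    using eq[of "(h, 0)"] by (simp add: ext_id_def Fh)
  have "E (S g, 0) = E (S g, y) - E (0, y)"
    using linear_diff[OF E, of "(S g, y)" "(0, y)"] by simp
  also have "\<dots> = (T (h - h'), - x)" by (simp add: Eh Eh' linear_diff[OF T])
  finally have "norm (T (h - h'), - x) \<le> norm (S g) * cE" using cE[of "(S g, 0)"] by (simp add: norm_Pair)
  from power_mono[OF this norm_ge_zero, of 2]
  have 1: "(norm (T (h - h')))\<^sup>2 + (norm x)\<^sup>2 \<le> cE\<^sup>2 * (norm (S g))\<^sup>2"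
    by (simp add: norm_Pair power_mult_distrib mult.commute)
  have "Ei (T h', x) = (0, y)" using Ei(1)[of "(0, y)"] by (simp add: Eh')
  then have "norm y \<le> norm (T h', x) * cEi" using Ei(2)[of "(T h', x)"] by (simp add: norm_Pair)
  then have "norm (h', x) \<le> (norm (T h', x) * cEi) * cG"
    using G(2)[of "(0, y)"] G(3) by (simp add: Gy norm_Pair) (meson mult_right_mono order.trans)
  from power_mono[OF this norm_ge_zero, of 2]
  have 2: "(norm h')\<^sup>2 + (norm x)\<^sup>2 \<le> (cG * cEi)\<^sup>2 * ((norm (T h'))\<^sup>2 + (norm x)\<^sup>2)"
    by (simp add: norm_Pair power_mult_distrib mult_ac)
  show ?thesis unfolding Fh fst_conv using 1 2 by blast
qed

lemma equiv_after_ext_split: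
  fixes T :: "'x::real_normed_vector \<Rightarrow> 'x" and S :: "'y::real_normed_vector \<Rightarrow> 'y"
    and JX' :: "'x1::real_normed_vector \<Rightarrow> 'x1" and JY' :: "'y1::real_normed_vector \<Rightarrow> 'y1"
  assumes "equiv_after_ext_via JX JY JX' JY' T S" and T: "linear T" and S: "linear S"
  obtains F :: "'x \<times> 'x1 \<Rightarrow> 'y \<times> 'y1" and C c
  where "bounded_linear F" "C > 0" "c \<ge> 0" "\<And>h. \<exists>h' (x::'x1).
      (norm h')\<^sup>2 + (norm x)\<^sup>2 \<le> C * ((norm (T h'))\<^sup>2 + (norm x)\<^sup>2) \<and>
      (norm (T (h - h')))\<^sup>2 + (norm x)\<^sup>2 \<le> c * (norm (S (fst (F (h, 0)))))\<^sup>2"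
proof -
  obtain E :: "'y \<times> 'y1 \<Rightarrow> 'x \<times> 'x1" and F :: "'x \<times> 'x1 \<Rightarrow> 'y \<times> 'y1"
    where E: "cinvertible (sumJ JY JY') (sumJ JX JX') E" and F: "cinvertible (sumJ JX JX') (sumJ JY JY') F"
      and eq: "\<And>p. ext_id T p = E (ext_id S (F p))"
    using assms(1) unfolding equiv_after_ext_via_def by blast
  from E obtain Ei where bE: "bounded_linear E" and Ei: "bounded_linear Ei" "\<And>z. Ei (E z) = z"
    unfolding cinvertible_def cblin_def by blast
  from F obtain G where bF: "bounded_linear F" and G: "bounded_linear G" "\<And>z. F (G z) = z"
    unfolding cinvertible_def cblin_def by blast
  obtain cE where cE: "\<And>z. norm (E z) \<le> norm z * cE" using bounded_linear.pos_bounded[OF bE] by blast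
  obtain cEi where cEi: "cEi > 0" "\<And>z. norm (Ei z) \<le> norm z * cEi"
    using bounded_linear.pos_bounded[OF Ei(1)] by blast
  obtain cG where cG: "cG > 0" "\<And>z. norm (G z) \<le> norm z * cG"
    using bounded_linear.pos_bounded[OF G(1)] by blast
  have "(cG * cEi)\<^sup>2 > 0" "cE\<^sup>2 \<ge> 0" using cG(1) cEi(1) by simp_all
  with equiv_after_ext_correction[OF eq T S bounded_linear.linear[OF bE] cE Ei(2) cEi(2) G(2) cG(2)] cG(1) bF
  show ?thesis using that by (meson less_imp_le)
qed

lemma tail_localisation_arith:
  fixes p s t u a r K X :: real
  assumes "p \<le> u + t" "s \<le> u + t" "0 \<le> s" "0 \<le> t" "t \<le> r * a" "0 \<le> r" "0 \<le> a"
    and "a\<^sup>2 + X \<le> K * (s\<^sup>2 + X)" "4 * K * r\<^sup>2 \<le> 1" "0 \<le> X" "0 \<le> p"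
  shows "p\<^sup>2 \<le> 4 * (u\<^sup>2 + X)"
proof -
  have "t\<^sup>2 \<le> r\<^sup>2 * a\<^sup>2" using power_mono[OF assms(5,4), of 2] by (simp add: power_mult_distrib)
  also have "\<dots> \<le> r\<^sup>2 * (K * (s\<^sup>2 + X))" using assms(8,10) by (simp add: mult_left_mono)
  also have "\<dots> \<le> (s\<^sup>2 + X) / 4" using assms(10) mult_right_mono[OF assms(9), of "s\<^sup>2 + X"] by (simp add: mult_ac)
  also have "\<dots> \<le> ((u + t)\<^sup>2 + X) / 4" using assms(2,3) by (simp add: power_mono)
  finally have t2: "2 * t\<^sup>2 \<le> 2 * u\<^sup>2 + X" by (simp add: power2_sum) (smt (verit) sum_squares_bound)
  have "p\<^sup>2 \<le> (u + t)\<^sup>2" by (rule power_mono[OF assms(1,11)])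
  also have "\<dots> \<le> 2 * u\<^sup>2 + 2 * t\<^sup>2"
    using sum_squares_bound[of u t] by (simp add: power2_sum)
  finally show ?thesis using t2 assms(10) by (smt (verit))
qed

context l2_model
begin

text \<open>If h vanishes below n0 while h' is controlled by D h', then D h is controlled by
  D (h - h'): the head of D h' equals minus the head of D (h - h'), and its tail is at most
  r |h'|, which the hypothesis on h' makes small against D h'.\<close>

lemma diag_op_tail_localisation:
  assumes d: "bounded (range d)" and r: "\<And>k. n0 \<le> k \<Longrightarrow> cmod (d k) \<le> r" "0 \<le> r"
    and h: "\<And>k. k < n0 \<Longrightarrow> coord h k = 0"
    and h': "(norm h')\<^sup>2 + X \<le> K * ((norm (diag_op U d h'))\<^sup>2 + X)"
    and K: "4 * K * r\<^sup>2 \<le> 1" and X: "0 \<le> X"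
  shows "(norm (diag_op U d h))\<^sup>2 \<le> 4 * ((norm (diag_op U d (h - h')))\<^sup>2 + X)"
proof -
  define ind_head where "ind_head k = (of_bool (k < n0) :: complex)" for k
  define ind_tail where "ind_tail k = (of_bool (n0 \<le> k) :: complex)" for k
  let ?D = "diag_op U d" and ?P = "diag_op U (\<lambda>k. ind_head k * d k)"
    and ?Q = "diag_op U (\<lambda>k. ind_tail k * d k)"
  have bdd: "bounded (range ind_head)" "bounded (range ind_tail)"
    by (auto intro: bounded_rangeI[of _ 1] simp: ind_head_def ind_tail_def)
  then have bddPQ: "bounded (range (\<lambda>k. ind_head k * d k))" "bounded (range (\<lambda>k. ind_tail k * d k))"
    using d by (auto intro: bounded_range_mult)
  have "(\<lambda>k. ind_head k * d k + ind_tail k * d k) = d"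
    by (simp add: fun_eq_iff ind_head_def ind_tail_def)
  then have split: "?D v = ?P v + ?Q v" for v
    using diag_op_add[OF bddPQ, of v] by simp
  have P: "?P v = diag_op U ind_head (?D v)" and Q: "?Q v = diag_op U ind_tail (?D v)" for v
    by (simp_all add: diag_op_diag_op bdd d)
  have contract: "norm (diag_op U ind_head w) \<le> norm w" "norm (diag_op U ind_tail w) \<le> norm w" for w
    using norm_diag_op_le[OF bdd(1), of w 1] norm_diag_op_le[OF bdd(2), of w 1]
    by (simp_all add: ind_head_def ind_tail_def)
  have Ph: "?P h = 0" by (rule diag_op_eq_0[OF bddPQ(1)]) (simp add: ind_head_def h)
  have lin: "linear ?P" "linear ?Q" by (simp_all add: linear_diag_op bddPQ)
  have "?P h' = - ?P (h - h')" by (simp add: linear_diff[OF lin(1)] Ph)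
  then have P_h': "norm (?P h') \<le> norm (?D (h - h'))" using contract(1) by (simp add: P)
  have Q_h: "?Q h = ?Q (h - h') + ?Q h'" by (simp add: linear_diff[OF lin(2)])
  have t: "norm (?Q h') \<le> r * norm h'"
    by (rule norm_diag_op_le[OF bddPQ(2)]) (simp add: ind_tail_def r)
  show ?thesis
  proof (rule tail_localisation_arith[OF _ _ norm_ge_zero norm_ge_zero t r(2) norm_ge_zero h' K X norm_ge_zero])
    have "?D h = ?Q (h - h') + ?Q h'" using split[of h] Ph Q_h by simp
    then have "norm (?D h) \<le> norm (?Q (h - h')) + norm (?Q h')" by (simp add: norm_triangle_ineq)
    moreover have "norm (?Q (h - h')) \<le> norm (?D (h - h'))" unfolding Q by (rule contract(2))
    ultimately show "norm (?D h) \<le> norm (?D (h - h')) + norm (?Q h')" by simp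
    have "norm (?D h') \<le> norm (?P h') + norm (?Q h')" unfolding split[of h'] by (rule norm_triangle_ineq)
    then show "norm (?D h') \<le> norm (?D (h - h')) + norm (?Q h')" using P_h' by simp
  qed
qed

end

lemma exists_mult_power_less:
  fixes q :: real
  assumes "0 < B" "0 < q" "q < 1"
  shows "\<exists>m. A * q ^ m < B"
proof (cases "A \<le> 0")
  case True
  then show ?thesis using assms(1) by (intro exI[of _ 0]) simp
next
  case False
  then obtain m where "q ^ m < B / A" using real_arch_pow_inv[of "B / A" q] assms by auto
  then show ?thesis using False by (intro exI[of _ m]) (simp add: field_simps mult.commute)
qed

lemma half_power_squared: "((1/2::real) ^ k)\<^sup>2 = (1/4) ^ k"
proof -
  have "((1/2::real) ^ k)\<^sup>2 = (1/2 * (1/2)) ^ k" unfolding power2_eq_square power_mult_distrib ..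
  then show ?thesis by simp
qed

lemma dyadic_gap:
  fixes N A :: real
  assumes "((1/2) ^ (m + n0 + 1) * N)\<^sup>2 \<le> A * ((1/4) ^ (m + 1) * N)\<^sup>2" "N \<noteq> 0"
  shows "(1/4) ^ n0 \<le> A * (1/4) ^ (m + 1)"
proof -
  define P where "P = (1/4::real) ^ (m + 1) * N\<^sup>2"
  have "P > 0" using assms(2) by (simp add: P_def)
  have lhs: "((1/2) ^ (m + n0 + 1) * N)\<^sup>2 = (1/4) ^ n0 * P"
    unfolding power_mult_distrib half_power_squared by (simp add: P_def power_add)
  have rhs: "A * ((1/4) ^ (m + 1) * N)\<^sup>2 = (A * (1/4) ^ (m + 1)) * P"
    by (simp add: P_def power_mult_distrib power2_eq_square)
  have "(1/4) ^ n0 * P \<le> (A * (1/4) ^ (m + 1)) * P" using assms(1) unfolding lhs rhs .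
  then show ?thesis using \<open>P > 0\<close> by (rule mult_right_le_imp_le)
qed

context l2_model
begin

lemma exists_vector_killed_by_head:
  fixes F :: "'h \<times> 'x::real_normed_vector \<Rightarrow> 'h \<times> 'y::real_normed_vector"
  assumes F: "linear F"
  obtains h where "h \<noteq> 0" "\<And>k. coord h k \<noteq> 0 \<Longrightarrow> n0 \<le> k \<and> k \<le> m + n0"
    "\<And>k. k < m \<Longrightarrow> coord (fst (F (h, 0))) k = 0"
proof -
  define ind where "ind k = (of_bool (k < m) :: complex)" for k
  have bdd: "bounded (range ind)" by (rule bounded_rangeI[of _ 1]) (simp add: ind_def)
  define \<Psi> where "\<Psi> h = diag_op U ind (fst (F (h, 0)))" for h
  have "linear (\<lambda>h::'h. (h, 0::'x))" by (rule linearI) (simp_all add: prod_eq_iff)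
  then have lin: "linear \<Psi>"
    unfolding \<Psi>_def
    by (intro linear_compose[OF linear_compose[OF linear_compose[OF _ F] linear_fst] linear_diag_op[OF bdd],
        unfolded o_def])
  have "\<Psi> ` span (block n0 (m + n0 + 1)) \<subseteq> span (block 0 m)"
    by (auto simp: \<Psi>_def coord_diag_op[OF bdd] ind_def intro!: finite_support_in_span_block)
  moreover have "card (block 0 m) < card (block n0 (m + n0 + 1))" by (simp add: card_block)
  ultimately obtain h where h: "h \<in> span (block n0 (m + n0 + 1))" "h \<noteq> 0" "\<Psi> h = 0"
    using span_kernel_nonzero[OF lin independent_block finite_block] by blast
  show ?thesis
  proof (rule that[OF h(2)])
    show "n0 \<le> k \<and> k \<le> m + n0" if "coord h k \<noteq> 0" for k
      using coord_span_block[OF h(1), of k] that by linarith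
    show "coord (fst (F (h, 0))) k = 0" if "k < m" for k
      using arg_cong[OF h(3), of "\<lambda>v. coord v k"] that by (simp add: \<Psi>_def coord_diag_op[OF bdd] ind_def coord_zero)
  qed
qed

lemma norm_diag_d1_ge:
  assumes "\<And>k. coord h k \<noteq> 0 \<Longrightarrow> k < n"
  shows "(1/2) ^ n * norm h \<le> norm (diag_op U d1 h)"
proof (rule norm_diag_op_ge[OF bounded_range_d1])
  fix k assume "coord h k \<noteq> 0"
  then have "k + 1 \<le> n" using assms by (simp add: Suc_leI)
  then show "(1/2) ^ n \<le> cmod (d1 k)" unfolding cmod_d1 by (rule power_decreasing) simp_all
qed simp

lemma norm_diag_d2_le:
  assumes "\<And>k. k < m \<Longrightarrow> coord h k = 0"
  shows "norm (diag_op U d2 h) \<le> (1/4) ^ (m + 1) * norm h"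
proof (rule norm_diag_op_le[OF bounded_range_d2])
  fix k assume "coord h k \<noteq> 0"
  then have "m \<le> k" using assms by (meson not_le)
  then have "m + 1 \<le> k + 1" by simp
  then show "cmod (d2 k) \<le> (1/4) ^ (m + 1)" unfolding cmod_d2 by (rule power_decreasing) simp_all
qed

lemma diag_d1_tail_localisation:
  assumes "\<And>k. k < n0 \<Longrightarrow> coord h k = 0"
    and "(norm h')\<^sup>2 + X \<le> C * ((norm (diag_op U d1 h'))\<^sup>2 + X)"
    and "4 * C * (1/4) ^ (n0 + 1) \<le> 1" and "0 \<le> X"
  shows "(norm (diag_op U d1 h))\<^sup>2 \<le> 4 * ((norm (diag_op U d1 (h - h')))\<^sup>2 + X)"
proof (rule diag_op_tail_localisation[OF bounded_range_d1 _ _ assms(1,2) _ assms(4)])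
  show "cmod (d1 k) \<le> (1/2) ^ (n0 + 1)" if "n0 \<le> k" for k
    unfolding cmod_d1 by (rule power_decreasing) (use that in simp_all)
  show "4 * C * ((1/2) ^ (n0 + 1))\<^sup>2 \<le> 1" unfolding half_power_squared by (rule assms(3))
qed simp

theorem not_equiv_after_ext_d1_d2:
  fixes JX' :: "'x::real_normed_vector \<Rightarrow> 'x" and JY' :: "'y::real_normed_vector \<Rightarrow> 'y"
  shows "\<not> equiv_after_ext_via JH JH JX' JY' (diag_op U d1) (diag_op U d2)"
proof
  let ?D1 = "diag_op U d1" and ?D2 = "diag_op U d2"
  assume "equiv_after_ext_via JH JH JX' JY' ?D1 ?D2"
  then obtain F :: "'h \<times> 'x \<Rightarrow> 'h \<times> 'y" and C c where "bounded_linear F" "C > 0" "c \<ge> 0"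
    and split: "\<And>h. \<exists>h' (x::'x).
      (norm h')\<^sup>2 + (norm x)\<^sup>2 \<le> C * ((norm (?D1 h'))\<^sup>2 + (norm x)\<^sup>2) \<and>
      (norm (?D1 (h - h')))\<^sup>2 + (norm x)\<^sup>2 \<le> c * (norm (?D2 (fst (F (h, 0)))))\<^sup>2"
    using equiv_after_ext_split linear_diag_op[OF bounded_range_d1] linear_diag_op[OF bounded_range_d2]
    by metis
  obtain cF where cF: "\<And>z. norm (F z) \<le> norm z * cF"
    using bounded_linear.bounded[OF \<open>bounded_linear F\<close>] by blast
  obtain n0 where n0: "C * (1/4::real) ^ n0 < 1"
    using exists_mult_power_less[of 1 "1/4" C] by auto
  obtain m where m: "c * cF\<^sup>2 * (1/4::real) ^ m < (1/4) ^ n0"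
    using exists_mult_power_less[of "(1/4) ^ n0" "1/4" "c * cF\<^sup>2"] by auto
  obtain h where "h \<noteq> 0" and supp: "\<And>k. coord h k \<noteq> 0 \<Longrightarrow> n0 \<le> k \<and> k \<le> m + n0"
    and g0: "\<And>k. k < m \<Longrightarrow> coord (fst (F (h, 0))) k = 0"
    using exists_vector_killed_by_head[OF bounded_linear.linear[OF \<open>bounded_linear F\<close>]] by blast
  obtain h' and x :: 'x where h': "(norm h')\<^sup>2 + (norm x)\<^sup>2 \<le> C * ((norm (?D1 h'))\<^sup>2 + (norm x)\<^sup>2)"
    and hh': "(norm (?D1 (h - h')))\<^sup>2 + (norm x)\<^sup>2 \<le> c * (norm (?D2 (fst (F (h, 0)))))\<^sup>2"
    using split[of h] by blast
  have vanish: "\<And>k. k < n0 \<Longrightarrow> coord h k = 0" using supp by (meson not_le)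
  have "(1/2) ^ (m + n0 + 1) * norm h \<le> norm (?D1 h)"
  proof (rule norm_diag_d1_ge)
    show "k < m + n0 + 1" if "coord h k \<noteq> 0" for k using supp[OF that] by linarith
  qed
  then have "((1/2) ^ (m + n0 + 1) * norm h)\<^sup>2 \<le> (norm (?D1 h))\<^sup>2" by (rule power_mono) simp
  also have "\<dots> \<le> 4 * ((norm (?D1 (h - h')))\<^sup>2 + (norm x)\<^sup>2)"
  proof (rule diag_d1_tail_localisation[OF vanish h'])
    show "4 * C * (1/4) ^ (n0 + 1) \<le> 1" using n0 by simp
  qed auto
  also have "\<dots> \<le> 4 * c * (norm (?D2 (fst (F (h, 0)))))\<^sup>2" using hh' by simp
  also have "\<dots> \<le> (4 * c * cF\<^sup>2) * ((1/4) ^ (m + 1) * norm h)\<^sup>2"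
  proof -
    have "norm (fst (F (h, 0))) \<le> cF * norm h"
      using norm_fst_le[of "fst (F (h, 0))" "snd (F (h, 0))"] cF[of "(h, 0)"]
      by (simp add: norm_Pair mult.commute)
    then have "norm (?D2 (fst (F (h, 0)))) \<le> (1/4) ^ (m + 1) * (cF * norm h)"
      using norm_diag_d2_le[of m "fst (F (h, 0))"] g0 by (simp add: mult_left_mono order.trans)
    from power_mono[OF this norm_ge_zero, of 2] \<open>c \<ge> 0\<close> show ?thesis
      by (simp only: power_mult_distrib mult_ac mult_left_mono)
  qed
  finally have "(1/4) ^ n0 \<le> (4 * c * cF\<^sup>2) * (1/4) ^ (m + 1)"
    by (rule dyadic_gap) (use \<open>h \<noteq> 0\<close> in simp)
  then show False using m by simp
qed

end

theorem mainTheorem5: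
  fixes JH :: "'h::banach \<Rightarrow> 'h" and U :: "(nat \<Rightarrow> complex) \<Rightarrow> 'h"
    and JZ1 :: "'z1::banach \<Rightarrow> 'z1" and JZ2 :: "'z2::banach \<Rightarrow> 'z2"
    and JX' :: "'x::banach \<Rightarrow> 'x" and JY' :: "'y::banach \<Rightarrow> 'y"
  assumes "is_l2_model JH U"
    and "complex_structure JZ1" and "complex_structure JZ2"
    and "complex_structure JX'" and "complex_structure JY'"
  shows "op_ideal JH JH JZ1 JZ2 (diag_op U (\<lambda>n. (1/2) ^ (n+1)))
           = op_ideal JH JH JZ1 JZ2 (diag_op U (\<lambda>n. (1/2) ^ (2*(n+1))))
         \<and> \<not> equiv_after_ext_via JH JH JX' JY'
               (diag_op U (\<lambda>n. (1/2) ^ (n+1))) (diag_op U (\<lambda>n. (1/2) ^ (2*(n+1))))"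
proof -
  interpret l2_model JH U by unfold_locales (rule assms(1))
  have d1: "(\<lambda>n. (1/2) ^ (n+1)) = d1" and d2: "(\<lambda>n. (1/2) ^ (2*(n+1))) = d2"
    by (simp_all add: fun_eq_iff d1_def d2_def)
  show ?thesis unfolding d1 d2 using op_ideal_d1_eq_d2 not_equiv_after_ext_d1_d2 by blast
qed

end
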